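(* Let $\varepsilon>0$. There exists $C(\varepsilon)>0$ such that if $Cn^{-1/2}\le p$ and $p=o(1)$, then a.a.s. $G(n,p)$ contains a spanning subgraph of minimum degree at least $(1-\varepsilon)np$ in which $\Omega(p^{-2})$ vertices are not contained in any triangle.
   Context: $G(n,p)$ is the binomial random graph on $n$ vertices; a.a.s. means with probability tending to $1$ as $n\to\infty$. "$\Omega(p^{-2})$ vertices" means at least $cp^{-2}$ vertices for some constant $c>0$ not depending on $n$. *)

theory Defs
  imports "HOL-Probability.Probability"
begin

text \<open>Graphs on vertex set {0..<n}: an edge set is a set of 2-element subsets of {..<n}.\<close>

definition vpairs :: "nat \<Rightarrow> nat set set" where
  "vpairs n = {{i, j} | i j. i < j \<and> j < n}"

definition Gnp :: "nat \<Rightarrow> real \<Rightarrow> nat set set pmf" where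
  "Gnp n p = map_pmf (\<lambda>f. {e \<in> vpairs n. f e})
                     (Pi_pmf (vpairs n) False (\<lambda>_. bernoulli_pmf p))"

definition degree :: "nat set set \<Rightarrow> nat \<Rightarrow> nat" where
  "degree E v = card {u. {u, v} \<in> E}"

definition in_triangle :: "nat set set \<Rightarrow> nat \<Rightarrow> bool" where
  "in_triangle E v \<longleftrightarrow> (\<exists>u w. u \<noteq> v \<and> w \<noteq> v \<and> u \<noteq> w \<and>
      {u, v} \<in> E \<and> {v, w} \<in> E \<and> {u, w} \<in> E)"

end

theory Submission
  imports Defs "HOL-Real_Asymp.Real_Asymp"
begin

text \<open>Take the first \<open>k \<approx> \<epsilon> p\<^sup>-\<^sup>2 / 256\<close> vertices as a special set \<open>S\<close> and call a vertex heavy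
  if it has more than \<open>T = \<epsilon> / (64 p)\<close> neighbours in \<open>S\<close>. Delete the edges between \<open>S\<close> and heavy
  vertices, and then every edge whose endpoints have a common neighbour in \<open>S\<close>; afterwards no
  vertex of \<open>S\<close> lies in a triangle. A vertex \<open>x\<close> loses three kinds of edges: if \<open>x\<close> is heavy,
  edges into \<open>S\<close>, which are few because \<open>|S| p\<close> is small compared with \<open>np\<close>; if \<open>x \<in> S\<close>, edges to
  heavy vertices, and a neighbour of \<open>x\<close> is heavy only with probability \<open>exp (- \<Omega>(\<epsilon> / p))\<close>;
  if \<open>x\<close> is light, edges \<open>{u, x}\<close> with \<open>u\<close> adjacent to some \<open>v \<in> N(x) \<inter> S\<close>, and given the star
  of \<open>x\<close> there are at most \<open>T \<cdot> 2np\<close> candidate pairs \<open>{v, u}\<close>, each an independent coin of bias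
  \<open>p\<close>. Chernoff bounds and a union bound over the vertices make each loss at most \<open>\<epsilon> np / 4\<close> for
  all vertices with probability \<open>1 - o(1)\<close> as soon as \<open>np \<ge> \<surd>n\<close>.\<close>

section \<open>Chernoff bounds for independent coins\<close>

abbreviation coin_pmf :: "'a set \<Rightarrow> real \<Rightarrow> ('a \<Rightarrow> bool) pmf" where
  "coin_pmf I p \<equiv> Pi_pmf I False (\<lambda>_. bernoulli_pmf p)"

lemma finite_set_coin_pmf: "finite I \<Longrightarrow> finite (set_pmf (coin_pmf I p))"
  by (subst set_Pi_pmf) (auto intro!: finite_PiE_dflt)

lemma exp_mult_card_eq_prod:
  assumes "finite I" "J \<subseteq> I"
  shows "exp (t * real (card {e\<in>J. f e})) = (\<Prod>e\<in>I. if e \<in> J \<and> f e then exp t else 1)"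
proof -
  have fJ: "finite J" using assms finite_subset by blast
  have "real (card {e\<in>J. f e}) = (\<Sum>e\<in>J. if f e then 1 else 0)"
    using fJ by (simp add: sum.If_cases Int_def)
  hence "exp (t * real (card {e\<in>J. f e})) = (\<Prod>e\<in>J. exp (t * (if f e then 1 else 0)))"
    by (simp add: sum_distrib_left exp_sum fJ)
  also have "\<dots> = (\<Prod>e\<in>J. if e \<in> J \<and> f e then exp t else 1)"
    by (intro prod.cong) auto
  also have "\<dots> = (\<Prod>e\<in>I. if e \<in> J \<and> f e then exp t else 1)"
    using assms by (intro prod.mono_neutral_left) auto
  finally show ?thesis .
qed

lemma expectation_exp_mult_card_coin_pmf:
  assumes "finite I" "J \<subseteq> I" "0 \<le> p" "p \<le> 1"
  shows "measure_pmf.expectation (coin_pmf I p) (\<lambda>f. exp (t * real (card {e\<in>J. f e})))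
         = (1 - p + p * exp t) ^ card J"
proof -
  have "measure_pmf.expectation (coin_pmf I p) (\<lambda>f. exp (t * real (card {e\<in>J. f e})))
     = measure_pmf.expectation (coin_pmf I p)
         (\<lambda>f. \<Prod>e\<in>I. (\<lambda>e b. if e \<in> J \<and> b then exp t else 1) e (f e))"
    using assms by (simp add: exp_mult_card_eq_prod)
  also have "\<dots> = (\<Prod>e\<in>I. measure_pmf.expectation (bernoulli_pmf p)
                            (\<lambda>b. if e \<in> J \<and> b then exp t else 1))"
    by (rule expectation_prod_Pi_pmf) (use assms in \<open>auto intro: integrable_measure_pmf_finite\<close>)
  also have "\<dots> = (\<Prod>e\<in>I. if e \<in> J then 1 - p + p * exp t else 1)"
    using assms by (intro prod.cong) (auto simp: integral_bernoulli_pmf)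
  also have "\<dots> = (\<Prod>e\<in>J. 1 - p + p * exp t)"
    using assms by (subst prod.If_cases) (auto simp: Int_absorb1)
  finally show ?thesis by simp
qed

lemma expectation_indicator_exp_mult_card_coin_pmf:
  assumes "finite I" "J \<subseteq> I" "0 \<le> p" "p \<le> 1" "e\<^sub>0 \<in> I" "e\<^sub>0 \<notin> J"
  shows "measure_pmf.expectation (coin_pmf I p)
           (\<lambda>f. (if f e\<^sub>0 then 1 else 0) * exp (t * real (card {e\<in>J. f e})))
         = p * (1 - p + p * exp t) ^ card J"
proof -
  let ?g = "\<lambda>e b. if e = e\<^sub>0 then (if b then 1 else 0) else if e \<in> J \<and> b then exp t else (1::real)"
  have factor: "(if f e\<^sub>0 then 1 else 0) * exp (t * real (card {e\<in>J. f e})) = (\<Prod>e\<in>I. ?g e (f e))"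
    for f
  proof -
    have "(\<Prod>e\<in>I. ?g e (f e)) = ?g e\<^sub>0 (f e\<^sub>0) * (\<Prod>e\<in>I - {e\<^sub>0}. ?g e (f e))"
      using assms by (simp add: prod.remove)
    also have "(\<Prod>e\<in>I - {e\<^sub>0}. ?g e (f e)) = (\<Prod>e\<in>I - {e\<^sub>0}. if e \<in> J \<and> f e then exp t else 1)"
      by (intro prod.cong) auto
    also have "\<dots> = exp (t * real (card {e\<in>J. f e}))"
      using assms by (intro exp_mult_card_eq_prod[symmetric]) auto
    finally show ?thesis by simp
  qed
  have "measure_pmf.expectation (coin_pmf I p)
          (\<lambda>f. (if f e\<^sub>0 then 1 else 0) * exp (t * real (card {e\<in>J. f e})))
     = (\<Prod>e\<in>I. measure_pmf.expectation (bernoulli_pmf p) (?g e))"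
    unfolding factor
    by (rule expectation_prod_Pi_pmf) (use assms in \<open>auto intro: integrable_measure_pmf_finite\<close>)
  also have "\<dots> = (\<Prod>e\<in>I. if e = e\<^sub>0 then p else if e \<in> J then 1 - p + p * exp t else 1)"
    using assms by (intro prod.cong) (auto simp: integral_bernoulli_pmf)
  also have "\<dots> = p * (\<Prod>e\<in>I - {e\<^sub>0}. if e \<in> J then 1 - p + p * exp t else 1)"
    using assms by (simp add: prod.remove)
  also have "(\<Prod>e\<in>I - {e\<^sub>0}. if e \<in> J then 1 - p + p * exp t else 1) = (\<Prod>e\<in>J. 1 - p + p * exp t)"
    using assms by (subst prod.If_cases) (auto simp: Int_absorb1 Diff_Int_distrib2)
  finally show ?thesis by simp
qed

lemma coin_pmf_markov:
  fixes u :: "('a \<Rightarrow> bool) \<Rightarrow> real"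
  assumes "finite I" "\<And>f. 0 \<le> u f" "0 < c"
  shows "measure_pmf.prob (coin_pmf I p) {f. c \<le> u f} \<le> measure_pmf.expectation (coin_pmf I p) u / c"
proof -
  have "integrable (measure_pmf (coin_pmf I p)) u"
    by (rule integrable_measure_pmf_finite[OF finite_set_coin_pmf[OF assms(1)]])
  from integral_Markov_inequality_measure[OF this, of "{}" c] assms show ?thesis by simp
qed

lemma coin_pmf_markov_count:
  fixes Q :: "'b \<Rightarrow> ('a \<Rightarrow> bool) \<Rightarrow> bool"
  assumes "finite A" "finite I" "0 < b"
  shows "measure_pmf.prob (coin_pmf I p) {f. b \<le> real (card {u\<in>A. Q u f})}
     \<le> (\<Sum>u\<in>A. measure_pmf.prob (coin_pmf I p) {f. Q u f}) / b"
proof -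
  have count: "real (card {u\<in>A. Q u f}) = (\<Sum>u\<in>A. indicator {f. Q u f} f)" for f
    using assms(1) by (simp add: indicator_def sum.If_cases Int_def)
  have "measure_pmf.prob (coin_pmf I p) {f. b \<le> real (card {u\<in>A. Q u f})}
     \<le> measure_pmf.expectation (coin_pmf I p) (\<lambda>f. real (card {u\<in>A. Q u f})) / b"
    by (rule coin_pmf_markov) (use assms in auto)
  also have "measure_pmf.expectation (coin_pmf I p) (\<lambda>f. real (card {u\<in>A. Q u f}))
     = (\<Sum>u\<in>A. measure_pmf.prob (coin_pmf I p) {f. Q u f})"
    unfolding count
    by (subst Bochner_Integration.integral_sum)
       (auto intro: integrable_measure_pmf_finite[OF finite_set_coin_pmf[OF assms(2)]]
             simp: measure_pmf.emeasure_eq_measure)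
  finally show ?thesis .
qed

lemma bernoulli_mgf_power_le:
  assumes "0 \<le> p" "p \<le> 1"
  shows "(1 - p + p * exp t) ^ m \<le> exp (p * real m * (exp t - 1))"
proof -
  have "0 \<le> 1 - p + p * exp t" using assms by (simp add: add_nonneg_nonneg)
  moreover have "1 - p + p * exp t \<le> exp (p * (exp t - 1))"
    using exp_ge_add_one_self[of "p * (exp t - 1)"] by (simp add: algebra_simps)
  ultimately have "(1 - p + p * exp t) ^ m \<le> exp (p * (exp t - 1)) ^ m"
    by (intro power_mono)
  also have "\<dots> = exp (p * real m * (exp t - 1))"
    by (simp flip: exp_of_nat_mult add: ac_simps)
  finally show ?thesis .
qed

lemma coin_pmf_chernoff_upper:
  assumes "finite I" "J \<subseteq> I" "0 \<le> p" "p \<le> 1" "0 \<le> t"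
  shows "measure_pmf.prob (coin_pmf I p) {f. a \<le> real (card {e\<in>J. f e})}
           \<le> exp (- t * a + p * real (card J) * (exp t - 1))"
proof -
  let ?u = "\<lambda>f. exp (t * real (card {e\<in>J. f e}))"
  have "measure_pmf.prob (coin_pmf I p) {f. a \<le> real (card {e\<in>J. f e})}
     \<le> measure_pmf.prob (coin_pmf I p) {f. exp (t * a) \<le> ?u f}"
    using assms(5) by (intro measure_pmf.finite_measure_mono) (auto intro!: mult_left_mono)
  also have "\<dots> \<le> measure_pmf.expectation (coin_pmf I p) ?u / exp (t * a)"
    by (rule coin_pmf_markov) (use assms in auto)
  also have "\<dots> \<le> exp (p * real (card J) * (exp t - 1)) / exp (t * a)"
    unfolding expectation_exp_mult_card_coin_pmf[OF assms(1-4)]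
    by (intro divide_right_mono bernoulli_mgf_power_le) (use assms in auto)
  finally show ?thesis by (simp add: exp_diff[symmetric])
qed

lemma coin_pmf_chernoff_lower:
  assumes "finite I" "J \<subseteq> I" "0 \<le> p" "p \<le> 1" "0 \<le> t"
  shows "measure_pmf.prob (coin_pmf I p) {f. real (card {e\<in>J. f e}) \<le> a}
           \<le> exp (t * a - p * real (card J) * (1 - exp (- t)))"
proof -
  let ?u = "\<lambda>f. exp (- t * real (card {e\<in>J. f e}))"
  have "measure_pmf.prob (coin_pmf I p) {f. real (card {e\<in>J. f e}) \<le> a}
     \<le> measure_pmf.prob (coin_pmf I p) {f. exp (- t * a) \<le> ?u f}"
    using assms(5) by (intro measure_pmf.finite_measure_mono) (auto intro!: mult_left_mono)
  also have "\<dots> \<le> measure_pmf.expectation (coin_pmf I p) ?u / exp (- t * a)"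
    by (rule coin_pmf_markov) (use assms in auto)
  also have "\<dots> \<le> exp (p * real (card J) * (exp (- t) - 1)) / exp (- t * a)"
    unfolding expectation_exp_mult_card_coin_pmf[OF assms(1-4)]
    by (intro divide_right_mono bernoulli_mgf_power_le) (use assms in auto)
  finally show ?thesis by (simp add: exp_diff[symmetric] algebra_simps)
qed

lemma coin_pmf_chernoff_upper_given_coin:
  assumes "finite I" "J \<subseteq> I" "0 \<le> p" "p \<le> 1" "0 \<le> t" "e\<^sub>0 \<in> I" "e\<^sub>0 \<notin> J"
  shows "measure_pmf.prob (coin_pmf I p) {f. f e\<^sub>0 \<and> a \<le> real (card {e\<in>J. f e})}
           \<le> p * exp (- t * a + p * real (card J) * (exp t - 1))"
proof -
  let ?u = "\<lambda>f. (if f e\<^sub>0 then 1 else 0) * exp (t * real (card {e\<in>J. f e}))"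
  have "measure_pmf.prob (coin_pmf I p) {f. f e\<^sub>0 \<and> a \<le> real (card {e\<in>J. f e})}
     \<le> measure_pmf.prob (coin_pmf I p) {f. exp (t * a) \<le> ?u f}"
    using assms(5) by (intro measure_pmf.finite_measure_mono) (auto intro!: mult_left_mono)
  also have "\<dots> \<le> measure_pmf.expectation (coin_pmf I p) ?u / exp (t * a)"
    by (rule coin_pmf_markov) (use assms in auto)
  also have "\<dots> \<le> p * exp (p * real (card J) * (exp t - 1)) / exp (t * a)"
    unfolding expectation_indicator_exp_mult_card_coin_pmf[OF assms(1-4,6,7)]
    by (intro divide_right_mono mult_left_mono bernoulli_mgf_power_le) (use assms in auto)
  finally show ?thesis
    by (simp add: exp_diff[symmetric] times_divide_eq_right[symmetric] del: times_divide_eq_right)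
qed

lemma prob_bind_pmf_le:
  assumes "\<And>x. x \<in> set_pmf M \<Longrightarrow> measure_pmf.prob (N x) X \<le> B"
  shows "measure_pmf.prob (bind_pmf M N) X \<le> B"
proof -
  obtain x0 where x0: "x0 \<in> set_pmf M" using set_pmf_not_empty[of M] by blast
  have B0: "0 \<le> B" using assms[OF x0] measure_nonneg order_trans by blast
  have "emeasure (measure_pmf (bind_pmf M N)) X = (\<integral>\<^sup>+x. emeasure (N x) X \<partial>M)"
    by simp
  also have "\<dots> \<le> (\<integral>\<^sup>+x. ennreal B \<partial>M)"
    by (intro nn_integral_mono_AE AE_pmfI)
       (auto simp: measure_pmf.emeasure_eq_measure intro!: ennreal_leI assms)
  also have "\<dots> = ennreal B"
    by (simp add: measure_pmf.emeasure_space_1)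
  finally show ?thesis
    using B0 by (simp add: measure_pmf.emeasure_eq_measure)
qed

lemma coin_pmf_union_eq_bind:
  assumes "finite U" "finite R" "U \<inter> R = {}"
  shows "coin_pmf (U \<union> R) p
     = bind_pmf (coin_pmf U p) (\<lambda>g. map_pmf (\<lambda>h x. if x \<in> U then g x else h x) (coin_pmf R p))"
proof -
  have "coin_pmf (U \<union> R) p
      = map_pmf (\<lambda>(g, h) x. if x \<in> U then g x else h x) (pair_pmf (coin_pmf U p) (coin_pmf R p))"
    using assms by (rule Pi_pmf_union)
  thus ?thesis by (simp add: pair_pmf_def map_pmf_def bind_assoc_pmf bind_return_pmf)
qed

text \<open>Conditionally on the coins in \<open>U\<close>, which determine \<open>P f\<close> and \<open>Q f\<close>, the coins in \<open>R\<close>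
  are still independent, so Chernoff's bound applies to the heads in \<open>P f\<close>.\<close>

lemma coin_pmf_chernoff_upper_conditional:
  fixes P :: "('a \<Rightarrow> bool) \<Rightarrow> 'a set" and Q :: "('a \<Rightarrow> bool) \<Rightarrow> bool"
  assumes fin: "finite U" "finite R" "U \<inter> R = {}"
    and local: "\<And>f g. (\<forall>e\<in>U. f e = g e) \<Longrightarrow> P f = P g \<and> (Q f \<longleftrightarrow> Q g)"
    and small: "\<And>f. Q f \<Longrightarrow> P f \<subseteq> R \<and> real (card (P f)) \<le> M"
    and p: "0 \<le> p" "p \<le> 1" and t: "0 \<le> t"
  shows "measure_pmf.prob (coin_pmf (U \<union> R) p) {f. Q f \<and> a \<le> real (card {e\<in>P f. f e})}
           \<le> exp (- t * a + p * M * (exp t - 1))"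
proof -
  let ?merge = "\<lambda>g h x. if x \<in> U then g x else h x"
  let ?A = "{f. Q f \<and> a \<le> real (card {e\<in>P f. f e})}"
  show ?thesis unfolding coin_pmf_union_eq_bind[OF fin]
  proof (rule prob_bind_pmf_le)
    fix g
    define g0 where "g0 = ?merge g (\<lambda>_. False)"
    have same: "P (?merge g h) = P g0" "Q (?merge g h) = Q g0" for h
      using local[of "?merge g h" g0] by (auto simp: g0_def)
    have image: "measure_pmf.prob (map_pmf (?merge g) (coin_pmf R p)) ?A
        = measure_pmf.prob (coin_pmf R p) (?merge g -` ?A)"
      by (rule measure_map_pmf)
    show "measure_pmf.prob (map_pmf (?merge g) (coin_pmf R p)) ?A \<le> exp (- t * a + p * M * (exp t - 1))"
    proof (cases "Q g0")
      case False
      hence empty: "?merge g -` ?A = {}" using same by auto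
      show ?thesis unfolding image empty by simp
    next
      case True
      have R: "P g0 \<subseteq> R" and M: "real (card (P g0)) \<le> M" using small[OF True] by auto
      have "{e\<in>P g0. ?merge g h e} = {e\<in>P g0. h e}" for h using R fin(3) by auto
      hence "?merge g -` ?A = {h. a \<le> real (card {e\<in>P g0. h e})}" using same True by auto
      hence "measure_pmf.prob (map_pmf (?merge g) (coin_pmf R p)) ?A
          = measure_pmf.prob (coin_pmf R p) {h. a \<le> real (card {e\<in>P g0. h e})}"
        unfolding image by (simp only:)
      also have "\<dots> \<le> exp (- t * a + p * real (card (P g0)) * (exp t - 1))"
        by (rule coin_pmf_chernoff_upper) (use fin R p t in auto)
      also have "\<dots> \<le> exp (- t * a + p * M * (exp t - 1))"
        using M p t by (simp add: mult_right_mono mult_left_mono)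
      finally show ?thesis .
    qed
  qed
qed

section \<open>Graphs given by their edge indicators\<close>

lemma insert_in_vpairs_iff: "{u, v} \<in> vpairs n \<longleftrightarrow> u \<noteq> v \<and> u < n \<and> v < n"
proof
  assume "{u, v} \<in> vpairs n"
  then obtain i j where "i < j" "j < n" "{u, v} = {i, j}" unfolding vpairs_def by auto
  thus "u \<noteq> v \<and> u < n \<and> v < n" by (auto simp: doubleton_eq_iff)
next
  assume uv: "u \<noteq> v \<and> u < n \<and> v < n"
  hence "{u, v} = {min u v, max u v} \<and> min u v < max u v \<and> max u v < n"
    by (auto simp: min_def max_def insert_commute)
  thus "{u, v} \<in> vpairs n" unfolding vpairs_def by blast
qed

lemma vpairsE:
  assumes "e \<in> vpairs n"
  obtains u v where "e = {u, v}" "u \<noteq> v" "u < n" "v < n"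
  using assms unfolding vpairs_def by auto

lemma finite_vpairs: "finite (vpairs n)"
  by (rule finite_subset[of _ "Pow {..<n}"]) (auto simp: vpairs_def)

lemma card_vpairs_elem: "e \<in> vpairs n \<Longrightarrow> card e = 2"
  by (auto elim: vpairsE)

lemma finite_neighbours: "G \<subseteq> vpairs n \<Longrightarrow> finite {u. {u, x} \<in> G}"
  by (rule finite_subset[of _ "{..<n}"]) (auto simp: insert_in_vpairs_iff)

definition graph_of :: "nat \<Rightarrow> (nat set \<Rightarrow> bool) \<Rightarrow> nat set set" where
  "graph_of n f = {e\<in>vpairs n. f e}"

lemma Gnp_eq_map_coin_pmf: "Gnp n p = map_pmf (graph_of n) (coin_pmf (vpairs n) p)"
  unfolding Gnp_def graph_of_def ..

lemma graph_of_subset_vpairs: "graph_of n f \<subseteq> vpairs n"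
  unfolding graph_of_def by auto

lemma insert_in_graph_of_iff: "{v, x} \<in> graph_of n f \<longleftrightarrow> v \<noteq> x \<and> v < n \<and> x < n \<and> f {v, x}"
  unfolding graph_of_def by (auto simp: insert_in_vpairs_iff)

lemma neighbours_graph_of:
  "A \<subseteq> {..<n} \<Longrightarrow> x < n \<Longrightarrow> {v\<in>A. {v, x} \<in> graph_of n f} = {v\<in>A - {x}. f {v, x}}"
  by (auto simp: insert_in_graph_of_iff)

lemma degree_graph_of: "x < n \<Longrightarrow> degree (graph_of n f) x = card {v\<in>{..<n} - {x}. f {v, x}}"
  unfolding degree_def by (rule arg_cong[where f = card]) (auto simp: insert_in_graph_of_iff)

definition spokes :: "nat set \<Rightarrow> nat \<Rightarrow> nat set set" where
  "spokes A x = (\<lambda>v. {v, x}) ` (A - {x})"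

lemma inj_on_spoke: "inj_on (\<lambda>v. {v, x}) B"
  by (auto simp: inj_on_def doubleton_eq_iff)

lemma card_spokes: "card (spokes A x) = card (A - {x})"
  unfolding spokes_def by (rule card_image[OF inj_on_spoke])

lemma card_true_spokes: "card {e\<in>spokes A x. f e} = card {v\<in>A - {x}. f {v, x}}"
proof -
  have "{e\<in>spokes A x. f e} = (\<lambda>v. {v, x}) ` {v\<in>A - {x}. f {v, x}}"
    unfolding spokes_def by auto
  thus ?thesis by (simp add: card_image[OF inj_on_spoke])
qed

lemma spokes_subset_vpairs: "A \<subseteq> {..<n} \<Longrightarrow> x < n \<Longrightarrow> spokes A x \<subseteq> vpairs n"
  unfolding spokes_def by (auto simp: insert_in_vpairs_iff)

abbreviation edge_pmf :: "nat \<Rightarrow> real \<Rightarrow> (nat set \<Rightarrow> bool) pmf" where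
  "edge_pmf n p \<equiv> coin_pmf (vpairs n) p"

lemma edge_pmf_chernoff_upper_degree:
  assumes "A \<subseteq> {..<n}" "x < n" "0 \<le> p" "p \<le> 1" "0 \<le> t"
  shows "measure_pmf.prob (edge_pmf n p) {f. a \<le> real (card {v\<in>A - {x}. f {v, x}})}
     \<le> exp (- t * a + p * real (card (A - {x})) * (exp t - 1))"
  using coin_pmf_chernoff_upper[OF finite_vpairs spokes_subset_vpairs[OF assms(1,2)] assms(3-5)]
  by (simp add: card_true_spokes card_spokes)

lemma edge_pmf_chernoff_lower_degree:
  assumes "A \<subseteq> {..<n}" "x < n" "0 \<le> p" "p \<le> 1" "0 \<le> t"
  shows "measure_pmf.prob (edge_pmf n p) {f. real (card {v\<in>A - {x}. f {v, x}}) \<le> a}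
     \<le> exp (t * a - p * real (card (A - {x})) * (1 - exp (- t)))"
  using coin_pmf_chernoff_lower[OF finite_vpairs spokes_subset_vpairs[OF assms(1,2)] assms(3-5)]
  by (simp add: card_true_spokes card_spokes)

lemma edge_pmf_chernoff_upper_degree_given_edge:
  assumes "A \<subseteq> {..<n}" "u < n" "x < n" "u \<noteq> x" "0 \<le> p" "p \<le> 1" "0 \<le> t"
  shows "measure_pmf.prob (edge_pmf n p) {f. f {u, x} \<and> a \<le> real (card {v\<in>A - {x} - {u}. f {v, u}})}
     \<le> p * exp (- t * a + p * real (card (A - {x} - {u})) * (exp t - 1))"
proof -
  have "spokes (A - {x}) u \<subseteq> vpairs n" using assms by (intro spokes_subset_vpairs) auto
  moreover have "{u, x} \<in> vpairs n" using assms by (simp add: insert_in_vpairs_iff)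
  moreover have "{u, x} \<notin> spokes (A - {x}) u"
    unfolding spokes_def using assms by (auto simp: doubleton_eq_iff)
  ultimately show ?thesis
    using coin_pmf_chernoff_upper_given_coin[OF finite_vpairs _ assms(5-7), of "spokes (A - {x}) u"]
    unfolding card_true_spokes card_spokes by blast
qed

section \<open>Removing the triangles at the special vertices\<close>

definition heavy :: "nat \<Rightarrow> real \<Rightarrow> nat set set \<Rightarrow> nat \<Rightarrow> bool" where
  "heavy k T G u \<longleftrightarrow> T < real (card {v\<in>{..<k}. {v, u} \<in> G})"

definition drop_heavy_edges :: "nat \<Rightarrow> real \<Rightarrow> nat set set \<Rightarrow> nat set set" where
  "drop_heavy_edges k T G = {e\<in>G. \<not> (\<exists>u v. e = {u, v} \<and> v < k \<and> heavy k T G u)}"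

definition drop_closing_edges :: "nat \<Rightarrow> real \<Rightarrow> nat set set \<Rightarrow> nat set set" where
  "drop_closing_edges k T G =
     {e\<in>drop_heavy_edges k T G. \<not> (\<exists>v<k. \<exists>a b. e = {a, b} \<and>
        {v, a} \<in> drop_heavy_edges k T G \<and> {v, b} \<in> drop_heavy_edges k T G)}"

lemma drop_closing_edges_subset: "drop_closing_edges k T G \<subseteq> G"
  unfolding drop_closing_edges_def drop_heavy_edges_def by blast

lemma not_in_triangle_drop_closing_edges:
  assumes "v < k" shows "\<not> in_triangle (drop_closing_edges k T G) v"
proof
  let ?H = "drop_heavy_edges k T G"
  assume "in_triangle (drop_closing_edges k T G) v"
  then obtain u w where uvw: "{u, v} \<in> drop_closing_edges k T G" "{v, w} \<in> drop_closing_edges k T G"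
      "{u, w} \<in> drop_closing_edges k T G"
    unfolding in_triangle_def by blast
  have "{v, u} \<in> ?H" "{v, w} \<in> ?H"
    using uvw(1,2) insert_commute[of u v "{}"] unfolding drop_closing_edges_def by auto
  with uvw(3) assms show False unfolding drop_closing_edges_def by blast
qed

text \<open>An edge \<open>{u, x}\<close> at a light vertex \<open>x\<close> can only be dropped because \<open>u\<close> lies on one of
  these edges.\<close>

definition nbhd_edges :: "nat \<Rightarrow> nat \<Rightarrow> nat \<Rightarrow> nat set set \<Rightarrow> nat set set" where
  "nbhd_edges n k x G = {e\<in>G. \<exists>v w. e = {v, w} \<and> v < k \<and> w < n \<and> v \<noteq> x \<and> w \<noteq> x \<and> v \<noteq> w \<and>
                                     {v, x} \<in> G \<and> {w, x} \<in> G}"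

lemma dropped_neighbour_cases:
  assumes G: "G \<subseteq> vpairs n" and ux: "{u, x} \<in> G" "{u, x} \<notin> drop_closing_edges k T G"
  shows "(heavy k T G x \<and> u < k) \<or> (x < k \<and> heavy k T G u)
         \<or> (\<not> heavy k T G x \<and> u \<in> \<Union> (nbhd_edges n k x G))"
proof (cases "{u, x} \<in> drop_heavy_edges k T G")
  case False
  then obtain a b where ab: "{u, x} = {a, b}" "b < k" "heavy k T G a"
    using ux(1) by (auto simp: drop_heavy_edges_def)
  from ab(1) have "(u = a \<and> x = b) \<or> (u = b \<and> x = a)" by (simp add: doubleton_eq_iff)
  thus ?thesis using ab(2,3) by auto
next
  case True
  then obtain v a b where v: "v < k" and ab: "{u, x} = {a, b}"
      "{v, a} \<in> drop_heavy_edges k T G" "{v, b} \<in> drop_heavy_edges k T G"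
    using True ux(2) unfolding drop_closing_edges_def by blast
  hence vux: "{v, u} \<in> drop_heavy_edges k T G" "{v, x} \<in> drop_heavy_edges k T G"
    unfolding doubleton_eq_iff by blast+
  hence "\<not> heavy k T G x"
    using v insert_commute[of x v "{}"] unfolding drop_heavy_edges_def by blast
  moreover have vG: "{v, u} \<in> G" "{v, x} \<in> G" using vux unfolding drop_heavy_edges_def by blast+
  hence "{v, u} \<in> vpairs n" "{v, x} \<in> vpairs n" "{u, x} \<in> vpairs n" using G ux(1) by blast+
  hence "v \<noteq> x" "v \<noteq> u" "u \<noteq> x" "u < n" by (simp_all add: insert_in_vpairs_iff)
  hence "{v, u} \<in> nbhd_edges n k x G"
    using vG ux(1) v unfolding nbhd_edges_def by blast
  ultimately show ?thesis by blast
qed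

lemma degree_le_degree_drop_closing_edges:
  assumes G: "G \<subseteq> vpairs n"
  shows "real (degree G x) \<le> real (degree (drop_closing_edges k T G) x)
     + (if heavy k T G x then real (card {v\<in>{..<k}. {v, x} \<in> G}) else 0)
     + (if x < k then real (card {u. {u, x} \<in> G \<and> heavy k T G u}) else 0)
     + (if heavy k T G x then 0 else 2 * real (card (nbhd_edges n k x G)))"
proof -
  let ?H = "drop_closing_edges k T G"
  define L1 where "L1 = (if heavy k T G x then {v\<in>{..<k}. {v, x} \<in> G} else {})"
  define L2 where "L2 = (if x < k then {u. {u, x} \<in> G \<and> heavy k T G u} else {})"
  define L3 where "L3 = (if heavy k T G x then {} else \<Union> (nbhd_edges n k x G))"
  have EG: "nbhd_edges n k x G \<subseteq> vpairs n" using G unfolding nbhd_edges_def by auto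
  have "{u. {u, x} \<in> G} \<subseteq> {u. {u, x} \<in> ?H} \<union> L1 \<union> L2 \<union> L3"
  proof
    fix u assume "u \<in> {u. {u, x} \<in> G}"
    thus "u \<in> {u. {u, x} \<in> ?H} \<union> L1 \<union> L2 \<union> L3"
      using dropped_neighbour_cases[OF G, of u x k T]
      by (cases "{u, x} \<in> ?H") (auto simp: L1_def L2_def L3_def)
  qed
  moreover have "finite {u. {u, x} \<in> ?H}"
    using finite_neighbours drop_closing_edges_subset G by (meson order_trans)
  moreover have "finite L2"
    unfolding L2_def using finite_neighbours[OF G] by (auto intro: finite_subset)
  moreover have "finite (\<Union> (nbhd_edges n k x G))"
    using EG finite_vpairs by (auto intro!: finite_Union intro: finite_subset elim!: vpairsE)
  hence "finite L3" by (simp add: L3_def)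
  ultimately have "degree G x \<le> card ({u. {u, x} \<in> ?H} \<union> L1 \<union> L2 \<union> L3)"
    unfolding degree_def by (intro card_mono) (auto simp: L1_def)
  also have "\<dots> \<le> degree ?H x + card L1 + card L2 + card L3"
    unfolding degree_def by (meson card_Un_le add_le_mono le_refl order_trans)
  finally have deg: "real (degree G x) \<le> real (degree ?H x) + card L1 + card L2 + card L3"
    by linarith
  have "card (\<Union> (nbhd_edges n k x G)) \<le> sum card (nbhd_edges n k x G)"
    by (rule card_Union_le_sum_card)
  also have "\<dots> = 2 * card (nbhd_edges n k x G)"
    using EG card_vpairs_elem by (subst sum.cong[OF refl, of _ _ "\<lambda>_. 2"]) auto
  finally have "real (card L3) \<le> (if heavy k T G x then 0 else 2 * real (card (nbhd_edges n k x G)))"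
    unfolding L3_def by simp
  with deg show ?thesis by (cases "heavy k T G x"; cases "x < k") (simp_all add: L1_def L2_def L3_def)
qed

definition nbhd_pairs :: "nat \<Rightarrow> nat \<Rightarrow> nat \<Rightarrow> (nat set \<Rightarrow> bool) \<Rightarrow> nat set set" where
  "nbhd_pairs n k x f = {{v, w} | v w. v < k \<and> w < n \<and> v \<noteq> x \<and> w \<noteq> x \<and> v \<noteq> w \<and> f {v, x} \<and> f {w, x}}"

lemma nbhd_pairs_eq: "nbhd_pairs n k x f =
  {{v, w} | v w. v \<in> {v\<in>{..<k} - {x}. f {v, x}} \<and> w \<in> {v\<in>{..<n} - {x}. f {v, x}} \<and> v \<noteq> w}"
  unfolding nbhd_pairs_def by blast

lemma nbhd_edges_graph_of:
  assumes "x < n" "k \<le> n"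
  shows "nbhd_edges n k x (graph_of n f) = {e\<in>nbhd_pairs n k x f. f e}"
proof (intro set_eqI iffI)
  fix e assume "e \<in> nbhd_edges n k x (graph_of n f)"
  then obtain v w where "e \<in> graph_of n f" "e = {v, w}" "v < k" "w < n" "v \<noteq> x" "w \<noteq> x" "v \<noteq> w"
      "{v, x} \<in> graph_of n f" "{w, x} \<in> graph_of n f"
    unfolding nbhd_edges_def by blast
  thus "e \<in> {e\<in>nbhd_pairs n k x f. f e}"
    unfolding nbhd_pairs_def by (auto simp: insert_in_graph_of_iff)
next
  fix e assume "e \<in> {e\<in>nbhd_pairs n k x f. f e}"
  then obtain v w where vw: "f e" "e = {v, w}" "v < k" "w < n" "v \<noteq> x" "w \<noteq> x" "v \<noteq> w"
      "f {v, x}" "f {w, x}"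
    unfolding nbhd_pairs_def by blast
  moreover have "e \<in> graph_of n f" "{v, x} \<in> graph_of n f" "{w, x} \<in> graph_of n f"
    using vw assms by (simp_all add: insert_in_graph_of_iff)
  ultimately show "e \<in> nbhd_edges n k x (graph_of n f)"
    unfolding nbhd_edges_def by blast
qed

lemma card_nbhd_pairs_le:
  "card (nbhd_pairs n k x f) \<le> card {v\<in>{..<k} - {x}. f {v, x}} * card {v\<in>{..<n} - {x}. f {v, x}}"
proof -
  let ?S = "{v\<in>{..<k} - {x}. f {v, x}}" and ?N = "{v\<in>{..<n} - {x}. f {v, x}}"
  have "nbhd_pairs n k x f \<subseteq> (\<lambda>(v, w). {v, w}) ` (?S \<times> ?N)"
    unfolding nbhd_pairs_eq by auto
  hence "card (nbhd_pairs n k x f) \<le> card ((\<lambda>(v, w). {v, w}) ` (?S \<times> ?N))"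
    by (rule card_mono[rotated]) auto
  also have "\<dots> \<le> card (?S \<times> ?N)" by (rule card_image_le) auto
  finally show ?thesis by (simp add: card_cartesian_product)
qed

lemma nbhd_pairs_subset_Diff_spokes:
  assumes "k \<le> n" shows "nbhd_pairs n k x f \<subseteq> vpairs n - spokes {..<n} x"
  using assms unfolding nbhd_pairs_def spokes_def
  by (auto simp: insert_in_vpairs_iff doubleton_eq_iff)

lemma exp_one_le_3: "exp (1::real) \<le> 3"
  using exp_bound[of 1] by simp

text \<open>The pairs inside the neighbourhood of \<open>x\<close> are determined by the spokes at \<open>x\<close> and are
  disjoint from them, so once the degrees are under control their number of edges is a sum of
  independent coins.\<close>

lemma prob_many_nbhd_edges_given_degrees_le:
  assumes x: "x < n" and kn: "k \<le> n" and p: "0 \<le> p" "p \<le> 1" and TD: "0 \<le> T" "0 \<le> D"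
  shows "measure_pmf.prob (edge_pmf n p)
     {f. (real (card {v\<in>{..<k} - {x}. f {v, x}}) \<le> T \<and> real (card {v\<in>{..<n} - {x}. f {v, x}}) \<le> D)
         \<and> a \<le> real (card {e\<in>nbhd_pairs n k x f. f e})}
     \<le> exp (- a + 2 * p * T * D)"
proof -
  define U where "U = spokes {..<n} x"
  define R where "R = vpairs n - U"
  have U: "U \<subseteq> vpairs n" using spokes_subset_vpairs[of "{..<n}" n x] x by (simp add: U_def)
  hence UR: "U \<union> R = vpairs n" unfolding R_def by blast
  let ?Q = "\<lambda>f. real (card {v\<in>{..<k} - {x}. f {v, x}}) \<le> T \<and> real (card {v\<in>{..<n} - {x}. f {v, x}}) \<le> D"
  have "measure_pmf.prob (coin_pmf (U \<union> R) p) {f. ?Q f \<and> a \<le> real (card {e\<in>nbhd_pairs n k x f. f e})}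
     \<le> exp (- 1 * a + p * (T * D) * (exp 1 - 1))"
  proof (rule coin_pmf_chernoff_upper_conditional[where P = "nbhd_pairs n k x" and Q = ?Q and M = "T * D"])
    show "finite U" "finite R" using finite_subset[OF U finite_vpairs] finite_vpairs by (auto simp: R_def)
    show "U \<inter> R = {}" by (auto simp: R_def)
  next
    fix f g :: "nat set \<Rightarrow> bool" assume "\<forall>e\<in>U. f e = g e"
    hence agree: "f {v, x} = g {v, x}" if "v < n" "v \<noteq> x" for v
      using that by (auto simp: U_def spokes_def)
    have Sk: "{v\<in>{..<k} - {x}. f {v, x}} = {v\<in>{..<k} - {x}. g {v, x}}"
      using agree kn by auto
    have Sn: "{v\<in>{..<n} - {x}. f {v, x}} = {v\<in>{..<n} - {x}. g {v, x}}"
      using agree by auto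
    show "nbhd_pairs n k x f = nbhd_pairs n k x g \<and> (?Q f \<longleftrightarrow> ?Q g)"
      by (simp only: nbhd_pairs_eq Sk Sn simp_thms)
  next
    fix f assume Q: "?Q f"
    have "real (card (nbhd_pairs n k x f))
        \<le> real (card {v\<in>{..<k} - {x}. f {v, x}}) * real (card {v\<in>{..<n} - {x}. f {v, x}})"
      using card_nbhd_pairs_le by (simp flip: of_nat_mult)
    also have "\<dots> \<le> T * D" using Q TD by (intro mult_mono) auto
    finally have "real (card (nbhd_pairs n k x f)) \<le> T * D" .
    moreover have "nbhd_pairs n k x f \<subseteq> R"
      unfolding R_def U_def by (rule nbhd_pairs_subset_Diff_spokes[OF kn])
    ultimately show "nbhd_pairs n k x f \<subseteq> R \<and> real (card (nbhd_pairs n k x f)) \<le> T * D" by simp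
  qed (use p in simp_all)
  also have "\<dots> \<le> exp (- a + 2 * p * T * D)"
  proof -
    have "p * (T * D) * (exp 1 - 1) \<le> p * (T * D) * 2"
      using exp_one_le_3 p TD by (intro mult_left_mono) auto
    thus ?thesis by simp
  qed
  finally show ?thesis unfolding UR .
qed

lemma prob_adjacent_heavy_le:
  assumes x: "x < n" and u: "u < n" "u \<noteq> x" and kn: "k \<le> n" and p: "0 \<le> p" "p \<le> 1"
  shows "measure_pmf.prob (edge_pmf n p) {f. f {u, x} \<and> heavy k T (graph_of n f) u}
     \<le> p * exp (1 - T + 2 * p * real k)"
proof -
  let ?C = "\<lambda>f. {v\<in>{..<k} - {x} - {u}. f {v, u}}"
  have "{f. f {u, x} \<and> heavy k T (graph_of n f) u} \<subseteq> {f. f {u, x} \<and> T - 1 \<le> real (card (?C f))}"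
  proof clarify
    fix f assume "heavy k T (graph_of n f) u"
    hence "T < real (card {v\<in>{..<k} - {u}. f {v, u}})"
      unfolding heavy_def using neighbours_graph_of[of "{..<k}" n u f] kn u by simp
    moreover have "card {v\<in>{..<k} - {u}. f {v, u}} \<le> card (insert x (?C f))"
      by (rule card_mono) auto
    also have "\<dots> \<le> Suc (card (?C f))" by (simp add: card_insert_if)
    ultimately show "T - 1 \<le> real (card (?C f))" by linarith
  qed
  hence "measure_pmf.prob (edge_pmf n p) {f. f {u, x} \<and> heavy k T (graph_of n f) u}
      \<le> measure_pmf.prob (edge_pmf n p) {f. f {u, x} \<and> T - 1 \<le> real (card (?C f))}"
    by (intro measure_pmf.finite_measure_mono) auto
  also have "\<dots> \<le> p * exp (- 1 * (T - 1) + p * real (card ({..<k} - {x} - {u})) * (exp 1 - 1))"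
    by (rule edge_pmf_chernoff_upper_degree_given_edge) (use x u kn p in auto)
  also have "\<dots> \<le> p * exp (1 - T + 2 * p * real k)"
  proof -
    have "card ({..<k} - {x} - {u}) \<le> k"
      using card_mono[of "{..<k}" "{..<k} - {x} - {u}"] by auto
    hence "p * real (card ({..<k} - {x} - {u})) * (exp 1 - 1) \<le> p * real k * 2"
      using exp_one_le_3 p by (intro mult_mono mult_left_mono) auto
    thus ?thesis using p by (intro mult_left_mono) auto
  qed
  finally show ?thesis .
qed

section \<open>The failure probability for fixed \<open>n\<close> and \<open>p\<close>\<close>

lemma chernoff_lower_exponent_le:
  fixes d p X :: real
  assumes d: "0 < d" "d \<le> 1" and p: "0 < p" "p \<le> 1" and X: "p \<le> X"
  shows "d * ((1 - d) * X) - (X - p) * (1 - exp (- d)) \<le> 1 - d ^ 3 * X / 2"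
proof -
  have "1 + d \<le> exp d" by simp
  hence "d / (1 + d) \<le> 1 - exp (- d)" using d by (simp add: exp_minus field_simps)
  hence "(X - p) * (d / (1 + d)) \<le> (X - p) * (1 - exp (- d))" using X by (intro mult_left_mono) auto
  moreover have "d * ((1 - d) * X) - (X - p) * (d / (1 + d)) = (p * d - d ^ 3 * X) / (1 + d)"
    using d by (simp add: field_simps power3_eq_cube)
  moreover have "p * d - d ^ 3 * X \<le> (1 + d) * (1 - d ^ 3 * X / 2)"
  proof -
    have "0 \<le> d ^ 3 * X" using d X p by simp
    hence "(1 + d) / 2 * (d ^ 3 * X) \<le> 1 * (d ^ 3 * X)" using d by (intro mult_right_mono) auto
    moreover have "p * d \<le> 1 + d" using p d mult_right_mono[of p 1 d] by linarith
    moreover have "(1 + d) * (1 - d ^ 3 * X / 2) = 1 + d - (1 + d) / 2 * (d ^ 3 * X)"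
      by (simp add: algebra_simps)
    ultimately show ?thesis by linarith
  qed
  hence "(p * d - d ^ 3 * X) / (1 + d) \<le> 1 - d ^ 3 * X / 2"
    using d by (simp add: divide_le_eq mult.commute)
  ultimately show ?thesis by linarith
qed

lemma exp_half_le: "exp (1 / 2 :: real) \<le> 7 / 4"
  using exp_bound[of "1 / 2"] by (simp add: power2_eq_square)

definition good_subgraph_event :: "nat \<Rightarrow> real \<Rightarrow> real \<Rightarrow> real \<Rightarrow> nat set set set" where
  "good_subgraph_event n \<epsilon> c q = {G. \<exists>H \<subseteq> G.
     (\<forall>v<n. real (degree H v) \<ge> (1 - \<epsilon>) * real n * q) \<and>
     real (card {v. v < n \<and> \<not> in_triangle H v}) \<ge> c / q\<^sup>2}"

lemma good_subgraph_event_mono: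
  assumes "\<epsilon> \<le> \<epsilon>'" "0 \<le> q"
  shows "good_subgraph_event n \<epsilon> c q \<subseteq> good_subgraph_event n \<epsilon>' c q"
proof -
  have "(1 - \<epsilon>') * real n * q \<le> (1 - \<epsilon>) * real n * q"
    using assms by (intro mult_right_mono) auto
  thus ?thesis unfolding good_subgraph_event_def by (blast intro: order_trans)
qed

definition failure_bound :: "real \<Rightarrow> nat \<Rightarrow> real \<Rightarrow> real" where
  "failure_bound \<epsilon> n p = 4 * real n * exp (2 - \<epsilon> ^ 3 / 128 * (real n * p))
     + (\<epsilon> / 256 / p\<^sup>2 + 1) * (4 * exp (3 - \<epsilon> / (128 * p)) / \<epsilon>)"

lemma exp_le_exp_decay:
  fixes a a' b X :: real
  assumes "b \<le> 2" "a \<le> a'" "0 \<le> X"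
  shows "exp (b - a' * X) \<le> exp (2 - a * X)"
  using assms mult_right_mono[of a a' X] by simp

locale sparsification =
  fixes \<epsilon> p :: real and n :: nat
  assumes eps: "0 < \<epsilon>" "\<epsilon> \<le> 1" and p: "0 < p" "p \<le> 1"
    and dense: "1 \<le> real n * p\<^sup>2" and n: "2 \<le> n"
begin

definition k :: nat where "k = nat \<lceil>\<epsilon> / 256 / p\<^sup>2\<rceil>"

definition T :: real where "T = \<epsilon> / (64 * p)"

abbreviation X :: real where "X \<equiv> real n * p"

lemma X_ge_p: "p \<le> X"
  using n p by simp

lemma inverse_p_le_X: "1 / p \<le> X"
proof -
  have "1 / p \<le> real n * p\<^sup>2 / p" using dense p by (intro divide_right_mono) auto
  thus ?thesis using p by (simp add: power2_eq_square)
qed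

lemma k_ge: "\<epsilon> / 256 / p\<^sup>2 \<le> real k"
  unfolding k_def by linarith

lemma k_le: "real k \<le> \<epsilon> / 256 / p\<^sup>2 + 1"
proof -
  have "0 \<le> \<epsilon> / 256 / p\<^sup>2" using eps by simp
  thus ?thesis unfolding k_def by linarith
qed

lemma k_le_n: "k \<le> n"
proof -
  have "1 / p\<^sup>2 \<le> real n * p\<^sup>2 / p\<^sup>2" using dense p by (intro divide_right_mono) auto
  hence "\<epsilon> / 256 / p\<^sup>2 \<le> \<epsilon> / 256 * real n" using p eps by (simp add: field_simps)
  hence "real k \<le> real n / 256 + 1" using k_le eps mult_right_mono[of \<epsilon> 1 "real n"] by simp
  thus ?thesis using n by simp
qed

lemma two_p_k_le: "2 * p * real k \<le> \<epsilon> / (128 * p) + 2"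
proof -
  have "2 * p * real k \<le> 2 * p * (\<epsilon> / 256 / p\<^sup>2 + 1)" using k_le p by (intro mult_left_mono) auto
  also have "\<dots> = \<epsilon> / (128 * p) + 2 * p" using p by (simp add: field_simps power2_eq_square)
  finally show ?thesis using p by simp
qed

lemma two_p_k_le_X: "2 * p * real k \<le> \<epsilon> * X / 128 + 2"
  using two_p_k_le mult_left_mono[OF inverse_p_le_X, of "\<epsilon> / 128"] eps by simp

definition "low_degree x = {f. real (card {v\<in>{..<n} - {x}. f {v, x}}) \<le> (1 - \<epsilon> / 4) * X}"
definition "high_degree x = {f. 2 * X \<le> real (card {v\<in>{..<n} - {x}. f {v, x}})}"
definition "many_special_neighbours x = {f. \<epsilon> * X / 4 \<le> real (card {v\<in>{..<k} - {x}. f {v, x}})}"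
definition "many_nbhd_edges x =
  {f. (real (card {v\<in>{..<k} - {x}. f {v, x}}) \<le> T \<and> real (card {v\<in>{..<n} - {x}. f {v, x}}) \<le> 2 * X)
      \<and> \<epsilon> * X / 8 \<le> real (card {e\<in>nbhd_pairs n k x f. f e})}"
definition "many_heavy_neighbours x =
  {f. \<epsilon> * X / 4 \<le> real (card {u\<in>{..<n} - {x}. f {u, x} \<and> heavy k T (graph_of n f) u})}"

lemma prob_low_degree_le:
  assumes "x < n" shows "measure_pmf.prob (edge_pmf n p) (low_degree x) \<le> exp (1 - (\<epsilon> / 4) ^ 3 * X / 2)"
proof -
  have "measure_pmf.prob (edge_pmf n p) (low_degree x)
     \<le> exp (\<epsilon> / 4 * ((1 - \<epsilon> / 4) * X) - p * real (card ({..<n} - {x})) * (1 - exp (- (\<epsilon> / 4))))"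
    unfolding low_degree_def by (rule edge_pmf_chernoff_lower_degree) (use assms p eps in auto)
  also have "p * real (card ({..<n} - {x})) = X - p"
    using assms by (simp add: of_nat_diff algebra_simps)
  also have "\<epsilon> / 4 * ((1 - \<epsilon> / 4) * X) - (X - p) * (1 - exp (- (\<epsilon> / 4))) \<le> 1 - (\<epsilon> / 4) ^ 3 * X / 2"
    by (rule chernoff_lower_exponent_le) (use eps p X_ge_p in auto)
  finally show ?thesis by simp
qed

lemma prob_high_degree_le:
  assumes "x < n" shows "measure_pmf.prob (edge_pmf n p) (high_degree x) \<le> exp (- X / 4)"
proof -
  have "measure_pmf.prob (edge_pmf n p) (high_degree x)
     \<le> exp (- (1 / 2) * (2 * X) + p * real (card ({..<n} - {x})) * (exp (1 / 2) - 1))"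
    unfolding high_degree_def by (rule edge_pmf_chernoff_upper_degree) (use assms p in auto)
  also have "p * real (card ({..<n} - {x})) * (exp (1 / 2) - 1) \<le> p * real n * (3 / 4)"
    using exp_half_le p card_Diff1_le[of "{..<n}" x]
    by (intro mult_mono mult_left_mono) auto
  finally show ?thesis by (simp add: mult.commute)
qed

lemma prob_many_special_neighbours_le:
  assumes "x < n"
  shows "measure_pmf.prob (edge_pmf n p) (many_special_neighbours x) \<le> exp (2 - \<epsilon> * X / 8)"
proof -
  have "measure_pmf.prob (edge_pmf n p) (many_special_neighbours x)
     \<le> exp (- 1 * (\<epsilon> * X / 4) + p * real (card ({..<k} - {x})) * (exp 1 - 1))"
    unfolding many_special_neighbours_def
    by (rule edge_pmf_chernoff_upper_degree) (use assms p k_le_n in auto)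
  also have "p * real (card ({..<k} - {x})) * (exp 1 - 1) \<le> p * real k * 2"
    using exp_one_le_3 p card_Diff1_le[of "{..<k}" x]
    by (intro mult_mono mult_left_mono) auto
  also have "\<dots> \<le> \<epsilon> * X / 128 + 2"
    using two_p_k_le_X by (simp add: mult.commute mult.left_commute)
  also have "exp (- 1 * (\<epsilon> * X / 4) + (\<epsilon> * X / 128 + 2)) \<le> exp (2 - \<epsilon> * X / 8)"
    using eps p by simp
  finally show ?thesis by simp
qed

lemma prob_many_nbhd_edges_le:
  assumes "x < n" shows "measure_pmf.prob (edge_pmf n p) (many_nbhd_edges x) \<le> exp (- \<epsilon> * X / 16)"
proof -
  have "measure_pmf.prob (edge_pmf n p) (many_nbhd_edges x) \<le> exp (- (\<epsilon> * X / 8) + 2 * p * T * (2 * X))"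
    unfolding many_nbhd_edges_def
    by (rule prob_many_nbhd_edges_given_degrees_le) (use assms p eps k_le_n in \<open>auto simp: T_def\<close>)
  also have "2 * p * T * (2 * X) = \<epsilon> * X / 16"
    using p by (simp add: T_def field_simps)
  finally show ?thesis by (simp add: ac_simps)
qed

lemma prob_many_heavy_neighbours_le:
  assumes "x < n"
  shows "measure_pmf.prob (edge_pmf n p) (many_heavy_neighbours x) \<le> 4 * exp (3 - \<epsilon> / (128 * p)) / \<epsilon>"
proof -
  let ?E = "exp (1 - T + 2 * p * real k)"
  have b: "0 < \<epsilon> * X / 4" using eps p n by simp
  have "measure_pmf.prob (edge_pmf n p) (many_heavy_neighbours x)
     \<le> (\<Sum>u\<in>{..<n} - {x}. measure_pmf.prob (edge_pmf n p) {f. f {u, x} \<and> heavy k T (graph_of n f) u})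
        / (\<epsilon> * X / 4)"
    unfolding many_heavy_neighbours_def by (rule coin_pmf_markov_count[OF _ finite_vpairs b]) auto
  also have "\<dots> \<le> (\<Sum>u\<in>{..<n} - {x}. p * ?E) / (\<epsilon> * X / 4)"
    by (intro divide_right_mono sum_mono prob_adjacent_heavy_le) (use assms p k_le_n b in auto)
  also have "\<dots> \<le> real n * (p * ?E) / (\<epsilon> * X / 4)"
    using card_Diff1_le[of "{..<n}" x] p b
    by (intro divide_right_mono mult_right_mono) auto
  also have "\<dots> = 4 * ?E / \<epsilon>" using eps p n by (simp add: field_simps)
  also have "\<dots> \<le> 4 * exp (3 - \<epsilon> / (128 * p)) / \<epsilon>"
    using two_p_k_le eps by (intro divide_right_mono mult_left_mono) (auto simp: T_def)
  finally show ?thesis .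
qed

lemma prob_bad_vertex_le:
  assumes x: "x < n"
  shows "measure_pmf.prob (edge_pmf n p)
           (low_degree x \<union> high_degree x \<union> many_special_neighbours x \<union> many_nbhd_edges x)
         \<le> 4 * exp (2 - \<epsilon> ^ 3 / 128 * X)"
proof -
  let ?P = "measure_pmf.prob (edge_pmf n p)" and ?b = "exp (2 - \<epsilon> ^ 3 / 128 * X)"
  have X: "0 \<le> X" using p by simp
  have "\<epsilon> ^ 3 \<le> \<epsilon> ^ 1" "\<epsilon> ^ 3 \<le> 1" using eps by (intro power_decreasing power_le_one; simp)+
  hence a: "\<epsilon> ^ 3 / 128 \<le> \<epsilon> / 8" "\<epsilon> ^ 3 / 128 \<le> \<epsilon> / 16" "\<epsilon> ^ 3 / 128 \<le> 1 / 4"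
    using eps by simp_all
  have "exp (1 - (\<epsilon> / 4) ^ 3 * X / 2) \<le> ?b" by (simp add: power_divide)
  with prob_low_degree_le[OF x] have "?P (low_degree x) \<le> ?b" by (rule order_trans)
  moreover have "exp (- X / 4) \<le> ?b"
    using exp_le_exp_decay[where b = 0, OF _ a(3) X] by simp
  with prob_high_degree_le[OF x] have "?P (high_degree x) \<le> ?b" by (rule order_trans)
  moreover have "exp (2 - \<epsilon> * X / 8) \<le> ?b"
    using exp_le_exp_decay[where b = 2, OF _ a(1) X] by (simp add: ac_simps)
  with prob_many_special_neighbours_le[OF x] have "?P (many_special_neighbours x) \<le> ?b"
    by (rule order_trans)
  moreover have "exp (- \<epsilon> * X / 16) \<le> ?b"
    using exp_le_exp_decay[where b = 0, OF _ a(2) X] by (simp add: ac_simps)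
  with prob_many_nbhd_edges_le[OF x] have "?P (many_nbhd_edges x) \<le> ?b" by (rule order_trans)
  moreover have "?P (low_degree x \<union> high_degree x \<union> many_special_neighbours x \<union> many_nbhd_edges x)
      \<le> ?P (low_degree x) + ?P (high_degree x) + ?P (many_special_neighbours x) + ?P (many_nbhd_edges x)"
    by (intro order_trans[OF measure_Un_le] add_right_mono) auto
  ultimately show ?thesis by linarith
qed

lemma degree_drop_closing_edges_ge:
  assumes x: "x < n"
    and good: "f \<notin> low_degree x \<union> high_degree x \<union> many_special_neighbours x \<union> many_nbhd_edges x"
    and few_heavy: "x < k \<Longrightarrow> f \<notin> many_heavy_neighbours x"
  shows "(1 - \<epsilon>) * real n * p \<le> real (degree (drop_closing_edges k T (graph_of n f)) x)"
proof -
  let ?G = "graph_of n f"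
  let ?Sx = "{v\<in>{..<k} - {x}. f {v, x}}"
  have special: "{v\<in>{..<k}. {v, x} \<in> ?G} = ?Sx"
    by (rule neighbours_graph_of) (use k_le_n x in auto)
  have "(1 - \<epsilon> / 4) * X < real (degree ?G x)"
    using good by (simp add: low_degree_def degree_graph_of[OF x])
  moreover have "(if heavy k T ?G x then real (card {v\<in>{..<k}. {v, x} \<in> ?G}) else 0) \<le> \<epsilon> * X / 4"
    using good eps p unfolding special by (auto simp: many_special_neighbours_def)
  moreover have "(if x < k then real (card {u. {u, x} \<in> ?G \<and> heavy k T ?G u}) else 0) \<le> \<epsilon> * X / 4"
  proof (cases "x < k")
    case True
    have "{u. {u, x} \<in> ?G \<and> heavy k T ?G u} = {u\<in>{..<n} - {x}. f {u, x} \<and> heavy k T ?G u}"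
      using x by (auto simp: insert_in_graph_of_iff)
    thus ?thesis using True few_heavy by (simp add: many_heavy_neighbours_def)
  qed (use eps p in simp)
  moreover have "(if heavy k T ?G x then 0 else 2 * real (card (nbhd_edges n k x ?G))) \<le> \<epsilon> * X / 4"
  proof (cases "heavy k T ?G x")
    case False
    hence "real (card ?Sx) \<le> T" unfolding heavy_def special by simp
    moreover have "real (card {v\<in>{..<n} - {x}. f {v, x}}) \<le> 2 * X"
      using good by (simp add: high_degree_def)
    ultimately have "real (card {e\<in>nbhd_pairs n k x f. f e}) < \<epsilon> * X / 8"
      using good by (simp add: many_nbhd_edges_def)
    thus ?thesis using False by (simp add: nbhd_edges_graph_of[OF x k_le_n])
  qed (use eps p in simp)
  ultimately have "(1 - \<epsilon> / 4) * X - 3 * (\<epsilon> * X / 4)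
      < real (degree (drop_closing_edges k T ?G) x)"
    using degree_le_degree_drop_closing_edges[OF graph_of_subset_vpairs, of n f x k T] by linarith
  moreover have "(1 - \<epsilon>) * X = (1 - \<epsilon> / 4) * X - 3 * (\<epsilon> * X / 4)" by (simp add: algebra_simps)
  ultimately show ?thesis by simp
qed

lemma graph_of_in_good_subgraph_event:
  assumes "\<And>x. x < n \<Longrightarrow>
             f \<notin> low_degree x \<union> high_degree x \<union> many_special_neighbours x \<union> many_nbhd_edges x"
    and "\<And>x. x < k \<Longrightarrow> f \<notin> many_heavy_neighbours x"
  shows "graph_of n f \<in> good_subgraph_event n \<epsilon> (\<epsilon> / 256) p"
proof -
  let ?H = "drop_closing_edges k T (graph_of n f)"
  have "{..<k} \<subseteq> {v. v < n \<and> \<not> in_triangle ?H v}"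
    using k_le_n not_in_triangle_drop_closing_edges by auto
  hence "k \<le> card {v. v < n \<and> \<not> in_triangle ?H v}"
    using card_mono[of "{v. v < n \<and> \<not> in_triangle ?H v}" "{..<k}"] by auto
  hence "\<epsilon> / 256 / p\<^sup>2 \<le> real (card {v. v < n \<and> \<not> in_triangle ?H v})" using k_ge by linarith
  moreover have "\<forall>v<n. (1 - \<epsilon>) * real n * p \<le> real (degree ?H v)"
    using degree_drop_closing_edges_ge assms by blast
  ultimately show ?thesis
    unfolding good_subgraph_event_def using drop_closing_edges_subset by blast
qed

lemma prob_good_subgraph_event_ge:
  "1 - failure_bound \<epsilon> n p \<le> measure_pmf.prob (Gnp n p) (good_subgraph_event n \<epsilon> (\<epsilon> / 256) p)"
proof -
  let ?M = "edge_pmf n p"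
  define Bad\<^sub>1 where "Bad\<^sub>1 = (\<Union>x<n. low_degree x \<union> high_degree x \<union> many_special_neighbours x \<union> many_nbhd_edges x)"
  define Bad\<^sub>2 where "Bad\<^sub>2 = (\<Union>x<k. many_heavy_neighbours x)"
  have "measure_pmf.prob ?M Bad\<^sub>1
      \<le> (\<Sum>x<n. measure_pmf.prob ?M
             (low_degree x \<union> high_degree x \<union> many_special_neighbours x \<union> many_nbhd_edges x))"
    unfolding Bad\<^sub>1_def by (rule measure_pmf.finite_measure_subadditive_finite) auto
  also have "\<dots> \<le> (\<Sum>x<n. 4 * exp (2 - \<epsilon> ^ 3 / 128 * X))"
    by (intro sum_mono prob_bad_vertex_le) simp
  finally have bad\<^sub>1: "measure_pmf.prob ?M Bad\<^sub>1 \<le> real n * (4 * exp (2 - \<epsilon> ^ 3 / 128 * X))"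
    by simp
  have "measure_pmf.prob ?M Bad\<^sub>2 \<le> (\<Sum>x<k. measure_pmf.prob ?M (many_heavy_neighbours x))"
    unfolding Bad\<^sub>2_def by (rule measure_pmf.finite_measure_subadditive_finite) auto
  also have "\<dots> \<le> (\<Sum>x<k. 4 * exp (3 - \<epsilon> / (128 * p)) / \<epsilon>)"
    using k_le_n by (intro sum_mono prob_many_heavy_neighbours_le) simp
  finally have bad\<^sub>2: "measure_pmf.prob ?M Bad\<^sub>2 \<le> real k * (4 * exp (3 - \<epsilon> / (128 * p)) / \<epsilon>)"
    by simp
  have "real k * (4 * exp (3 - \<epsilon> / (128 * p)) / \<epsilon>)
      \<le> (\<epsilon> / 256 / p\<^sup>2 + 1) * (4 * exp (3 - \<epsilon> / (128 * p)) / \<epsilon>)"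
    using k_le eps by (intro mult_right_mono) auto
  moreover have "measure_pmf.prob ?M (Bad\<^sub>1 \<union> Bad\<^sub>2) \<le> measure_pmf.prob ?M Bad\<^sub>1 + measure_pmf.prob ?M Bad\<^sub>2"
    by (rule measure_Un_le) auto
  ultimately have "measure_pmf.prob ?M (Bad\<^sub>1 \<union> Bad\<^sub>2) \<le> failure_bound \<epsilon> n p"
    using bad\<^sub>1 bad\<^sub>2 unfolding failure_bound_def by simp
  moreover have "UNIV - (Bad\<^sub>1 \<union> Bad\<^sub>2) \<subseteq> graph_of n -` good_subgraph_event n \<epsilon> (\<epsilon> / 256) p"
    using graph_of_in_good_subgraph_event unfolding Bad\<^sub>1_def Bad\<^sub>2_def by blast
  hence "measure_pmf.prob ?M (UNIV - (Bad\<^sub>1 \<union> Bad\<^sub>2))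
      \<le> measure_pmf.prob (Gnp n p) (good_subgraph_event n \<epsilon> (\<epsilon> / 256) p)"
    unfolding Gnp_eq_map_coin_pmf by (simp add: measure_pmf.finite_measure_mono)
  ultimately show ?thesis using measure_pmf.prob_compl[of "Bad\<^sub>1 \<union> Bad\<^sub>2" ?M] by simp
qed

end

section \<open>Asymptotics\<close>

lemma sqrt_le_and_dense_if_inverse_sqrt_le:
  fixes q :: real
  assumes n: "1 \<le> n" and q: "real n powr (-1 / 2) \<le> q"
  shows "0 < q" "sqrt (real n) \<le> real n * q" "1 \<le> real n * q\<^sup>2"
proof -
  have inv: "real n powr (-1 / 2) = 1 / sqrt (real n)"
    using n by (simp add: powr_minus_divide powr_half_sqrt)
  have s: "0 < sqrt (real n)" using n by simp
  show q0: "0 < q" using q s unfolding inv by (meson divide_pos_pos order_less_le_trans zero_less_one)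
  have "real n * (1 / sqrt (real n)) \<le> real n * q" using q unfolding inv by (intro mult_left_mono) auto
  thus nq: "sqrt (real n) \<le> real n * q" by (simp add: real_div_sqrt)
  have "sqrt (real n) * (1 / sqrt (real n)) \<le> (real n * q) * q"
    using nq q s q0 unfolding inv by (intro mult_mono) auto
  thus "1 \<le> real n * q\<^sup>2" using s by (simp add: power2_eq_square mult.assoc)
qed

lemma eventually_sparsification:
  assumes "0 < \<epsilon>" "\<epsilon> \<le> 1" and p: "\<forall>\<^sub>F n in sequentially. real n powr (-1 / 2) \<le> p n" "p \<longlonglongrightarrow> 0"
  shows "\<forall>\<^sub>F n in sequentially. sparsification \<epsilon> (p n) n \<and> sqrt (real n) \<le> real n * p n"
  using p(1) order_tendstoD(2)[OF p(2) zero_less_one] eventually_ge_at_top[of 2]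
proof eventually_elim
  case (elim n)
  thus ?case
    using assms sqrt_le_and_dense_if_inverse_sqrt_le[of n "p n"] by (auto simp: sparsification_def)
qed

lemma failure_bound_tendsto_zero:
  assumes eps: "0 < \<epsilon>" and p: "p \<longlonglongrightarrow> 0" "\<forall>\<^sub>F n in sequentially. 0 < p n"
    and sqrt: "\<forall>\<^sub>F n in sequentially. sqrt (real n) \<le> real n * p n"
  shows "(\<lambda>n. failure_bound \<epsilon> n (p n)) \<longlonglongrightarrow> 0"
proof -
  let ?a = "\<epsilon> ^ 3 / 128"
  have "(\<lambda>n. 4 * real n * exp (2 - ?a * (real n * p n))) \<longlonglongrightarrow> 0"
  proof (rule tendsto_sandwich[OF _ _ tendsto_const])
    show "\<forall>\<^sub>F n in sequentially. 0 \<le> 4 * real n * exp (2 - ?a * (real n * p n))" by simp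
    show "\<forall>\<^sub>F n in sequentially. 4 * real n * exp (2 - ?a * (real n * p n))
            \<le> 4 * real n * exp (2 - ?a * sqrt (real n))"
      using sqrt by eventually_elim (use eps in \<open>simp add: mult_left_mono\<close>)
    show "(\<lambda>n. 4 * real n * exp (2 - ?a * sqrt (real n))) \<longlonglongrightarrow> 0"
      using eps by real_asymp
  qed
  moreover have "((\<lambda>y. (\<epsilon> / 256 / y\<^sup>2 + 1) * (4 * exp (3 - \<epsilon> / (128 * y)) / \<epsilon>)) \<longlongrightarrow> 0) (at_right 0)"
    using eps by real_asymp
  hence "(\<lambda>n. (\<epsilon> / 256 / (p n)\<^sup>2 + 1) * (4 * exp (3 - \<epsilon> / (128 * p n)) / \<epsilon>)) \<longlonglongrightarrow> 0"
    by (rule filterlim_compose) (use p in \<open>auto intro: tendsto_imp_filterlim_at_right\<close>)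
  ultimately show ?thesis unfolding failure_bound_def by (rule tendsto_add_zero)
qed

lemma prob_good_subgraph_event_tendsto_1:
  assumes \<delta>: "0 < \<delta>" "\<delta> \<le> 1" "\<delta> \<le> \<epsilon>"
    and p: "\<forall>\<^sub>F n in sequentially. real n powr (-1 / 2) \<le> p n" and lim: "p \<longlonglongrightarrow> 0"
  shows "(\<lambda>n. measure_pmf.prob (Gnp n (p n)) (good_subgraph_event n \<epsilon> (\<delta> / 256) (p n))) \<longlonglongrightarrow> 1"
proof -
  have ev: "\<forall>\<^sub>F n in sequentially. sparsification \<delta> (p n) n \<and> sqrt (real n) \<le> real n * p n"
    using \<delta>(1,2) p lim by (rule eventually_sparsification)
  have lower: "\<forall>\<^sub>F n in sequentially. 1 - failure_bound \<delta> n (p n)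
          \<le> measure_pmf.prob (Gnp n (p n)) (good_subgraph_event n \<epsilon> (\<delta> / 256) (p n))"
    using ev
  proof eventually_elim
    case (elim n)
    then interpret sparsification \<delta> "p n" n by simp
    have "good_subgraph_event n \<delta> (\<delta> / 256) (p n) \<subseteq> good_subgraph_event n \<epsilon> (\<delta> / 256) (p n)"
      using good_subgraph_event_mono[OF \<delta>(3)] p by simp
    hence "measure_pmf.prob (Gnp n (p n)) (good_subgraph_event n \<delta> (\<delta> / 256) (p n))
        \<le> measure_pmf.prob (Gnp n (p n)) (good_subgraph_event n \<epsilon> (\<delta> / 256) (p n))"
      by (rule measure_pmf.finite_measure_mono) simp
    with prob_good_subgraph_event_ge show ?case by linarith
  qed
  have "(\<lambda>n. failure_bound \<delta> n (p n)) \<longlonglongrightarrow> 0"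
  proof (rule failure_bound_tendsto_zero[OF \<delta>(1) lim])
    show "\<forall>\<^sub>F n in sequentially. 0 < p n"
      using ev by (rule eventually_mono) (simp add: sparsification_def)
    show "\<forall>\<^sub>F n in sequentially. sqrt (real n) \<le> real n * p n"
      using ev by (rule eventually_mono) simp
  qed
  hence "(\<lambda>n. 1 - failure_bound \<delta> n (p n)) \<longlonglongrightarrow> 1"
    using tendsto_diff[OF tendsto_const] by fastforce
  thus ?thesis
    by (intro tendsto_sandwich[OF lower _ _ tendsto_const]) (simp_all add: measure_pmf.prob_le_1)
qed

theorem proposition4p6:
  fixes \<epsilon> :: real
  assumes "\<epsilon> > 0"
  shows "\<exists>C>0. \<forall>p :: nat \<Rightarrow> real.
           (\<forall>\<^sub>F n in sequentially. C * real n powr (-1/2) \<le> p n) \<longrightarrow>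
           p \<longlonglongrightarrow> 0 \<longrightarrow>
           (\<exists>c>0. (\<lambda>n. measure_pmf.prob (Gnp n (p n))
              {G. \<exists>H \<subseteq> G.
                   (\<forall>v<n. real (degree H v) \<ge> (1 - \<epsilon>) * real n * p n) \<and>
                   real (card {v. v < n \<and> \<not> in_triangle H v}) \<ge> c / (p n)\<^sup>2})
            \<longlonglongrightarrow> 1)"
proof (rule exI[of _ 1], intro conjI allI impI)
  fix p :: "nat \<Rightarrow> real"
  assume "\<forall>\<^sub>F n in sequentially. 1 * real n powr (-1/2) \<le> p n" and "p \<longlonglongrightarrow> 0"
  hence "(\<lambda>n. measure_pmf.prob (Gnp n (p n)) (good_subgraph_event n \<epsilon> (min \<epsilon> 1 / 256) (p n)))
      \<longlonglongrightarrow> 1"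
    using assms by (intro prob_good_subgraph_event_tendsto_1) auto
  moreover have "0 < min \<epsilon> 1 / 256" using assms by simp
  ultimately show "\<exists>c>0. (\<lambda>n. measure_pmf.prob (Gnp n (p n)) {G. \<exists>H \<subseteq> G.
                   (\<forall>v<n. real (degree H v) \<ge> (1 - \<epsilon>) * real n * p n) \<and>
                   real (card {v. v < n \<and> \<not> in_triangle H v}) \<ge> c / (p n)\<^sup>2}) \<longlonglongrightarrow> 1"
    unfolding good_subgraph_event_def by blast
qed simp

end
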